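(* Let $G$ be a graph. If $G$ has a pan cycle $C$, then $\mathsf{pn}(G)=\mathsf{pn}(G-C)+1$, where $G-C$ denotes the graph obtained from $G$ by deleting all edges of $C$.
   Context: All graphs are finite, simple and undirected. A path partition of $G$ is a collection of pairwise edge-disjoint paths in $G$ whose edge sets together cover $E(G)$; $\mathsf{pn}(G)$ is the minimum size of a path partition. A pan cycle of $G$ is a cycle $C$ in $G$ containing a unique vertex $v$ with $\deg_G(v)=3$, while every other vertex $w$ of $C$ has $\deg_G(w)=2$. *)

theory Defs
  imports Main
begin

definition graph :: "'a set \<Rightarrow> 'a set set \<Rightarrow> bool" where
  "graph V E \<longleftrightarrow> finite V \<and> (\<forall>e\<in>E. \<exists>u v. e = {u, v} \<and> u \<noteq> v \<and> u \<in> V \<and> v \<in> V)"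

definition degree :: "'a set set \<Rightarrow> 'a \<Rightarrow> nat" where
  "degree E v = card {e \<in> E. v \<in> e}"

definition walk_edges :: "'a list \<Rightarrow> 'a set set" where
  "walk_edges xs = set (map (\<lambda>(u, v). {u, v}) (zip xs (tl xs)))"

definition is_path :: "'a set \<Rightarrow> 'a set set \<Rightarrow> 'a list \<Rightarrow> bool" where
  "is_path V E xs \<longleftrightarrow> length xs \<ge> 2 \<and> distinct xs \<and> set xs \<subseteq> V \<and>
     (\<forall>i < length xs - 1. {xs ! i, xs ! Suc i} \<in> E)"

definition is_cycle :: "'a set \<Rightarrow> 'a set set \<Rightarrow> 'a list \<Rightarrow> bool" where
  "is_cycle V E xs \<longleftrightarrow> length xs \<ge> 3 \<and> distinct xs \<and> set xs \<subseteq> V \<and>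
     (\<forall>i < length xs - 1. {xs ! i, xs ! Suc i} \<in> E) \<and> {last xs, hd xs} \<in> E"

definition cycle_edges :: "'a list \<Rightarrow> 'a set set" where
  "cycle_edges xs = walk_edges xs \<union> {{last xs, hd xs}}"

text \<open>A path partition, represented by the set of edge sets of its paths
  (paths are nonempty and pairwise edge-disjoint, so this loses nothing).\<close>
definition path_partition :: "'a set \<Rightarrow> 'a set set \<Rightarrow> 'a set set set \<Rightarrow> bool" where
  "path_partition V E P \<longleftrightarrow>
     (\<forall>p\<in>P. \<exists>xs. is_path V E xs \<and> p = walk_edges xs) \<and>
     pairwise disjnt P \<and> \<Union>P = E"

definition pn :: "'a set \<Rightarrow> 'a set set \<Rightarrow> nat" where
  "pn V E = (LEAST n. \<exists>P. path_partition V E P \<and> card P = n)"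

definition is_pan_cycle :: "'a set \<Rightarrow> 'a set set \<Rightarrow> 'a list \<Rightarrow> bool" where
  "is_pan_cycle V E C \<longleftrightarrow> is_cycle V E C \<and>
     (\<exists>v\<in>set C. degree E v = 3 \<and> (\<forall>w\<in>set C. w \<noteq> v \<longrightarrow> degree E w = 2))"

end

theory Submission
  imports Defs
begin

text \<open>Write the pan cycle as \<open>v # cs\<close> with \<open>v\<close> the vertex of degree 3, and let \<open>e\<^sub>0\<close>
  be the unique edge at \<open>v\<close> outside the cycle. Every edge at a vertex of \<open>cs\<close> is a
  cycle edge, so along a path the membership of edges in the cycle can only change at \<open>v\<close>.
  Hence a path using both cycle edges and other edges passes through \<open>e\<^sub>0\<close>, and removing
  its cycle edges leaves a path. In an optimal path partition of \<open>G\<close> some path lies inside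
  the cycle: otherwise all cycle edges would lie on the one path containing \<open>e\<^sub>0\<close>, which
  would then have three edges at \<open>v\<close>. Dropping that path and the cycle edges of the others
  gives \<open>pn (G - C) < pn G\<close>. Conversely, in an optimal partition of \<open>G - C\<close> the path
  through \<open>e\<^sub>0\<close> ends at \<open>v\<close>; extending it once around the cycle and adding the closing
  edge as a new path gives \<open>pn G \<le> pn (G - C) + 1\<close>.\<close>

lemma walk_edges_Nil [simp]: "walk_edges [] = {}"
  and walk_edges_singleton [simp]: "walk_edges [x] = {}"
  and walk_edges_Cons_Cons [simp]: "walk_edges (x # y # xs) = insert {x, y} (walk_edges (y # xs))"
  by (simp_all add: walk_edges_def)

lemma walk_edges_append:
  "xs \<noteq> [] \<Longrightarrow> ys \<noteq> [] \<Longrightarrow>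
    walk_edges (xs @ ys) = insert {last xs, hd ys} (walk_edges xs \<union> walk_edges ys)"
proof (induction xs rule: induct_list012)
  case (2 x)
  then show ?case by (cases ys) auto
qed auto

lemma walk_edges_snoc: "xs \<noteq> [] \<Longrightarrow> walk_edges (xs @ [v]) = insert {last xs, v} (walk_edges xs)"
  by (simp add: walk_edges_append)

lemma walk_edges_split: "walk_edges (as @ v # bs) = walk_edges (as @ [v]) \<union> walk_edges (v # bs)"
  by (cases "as = []") (auto simp: walk_edges_append)

lemma walk_edges_rev: "walk_edges (rev xs) = walk_edges xs"
proof (induction xs)
  case (Cons x xs)
  show ?case
  proof (cases "xs = []")
    case False
    then have "walk_edges (rev (x # xs)) = insert {hd xs, x} (walk_edges xs)"
      using Cons.IH by (simp add: walk_edges_snoc last_rev)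
    also have "\<dots> = walk_edges (x # xs)"
      using False by (cases xs) (auto simp: insert_commute)
    finally show ?thesis .
  qed simp
qed simp

lemma walk_edges_conv_nth: "walk_edges xs = {{xs ! i, xs ! Suc i} | i. i < length xs - 1}"
  unfolding walk_edges_def set_map set_zip
  apply (auto simp: nth_tl)
  apply (rule_tac x="(xs ! i, tl xs ! i)" in image_eqI)
   apply (auto simp: nth_tl)
  done

lemma walk_edge_subset: "e \<in> walk_edges xs \<Longrightarrow> e \<subseteq> set xs"
  by (auto simp: walk_edges_conv_nth)

lemma is_path_iff:
  "is_path V E xs \<longleftrightarrow> 2 \<le> length xs \<and> distinct xs \<and> set xs \<subseteq> V \<and> walk_edges xs \<subseteq> E"
  by (auto simp: is_path_def walk_edges_conv_nth)

lemma is_cycle_iff: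
  "is_cycle V E xs \<longleftrightarrow> 3 \<le> length xs \<and> distinct xs \<and> set xs \<subseteq> V \<and> cycle_edges xs \<subseteq> E"
  by (auto simp: is_cycle_def cycle_edges_def walk_edges_conv_nth)

lemma is_path_mono: "is_path V E xs \<Longrightarrow> E \<subseteq> F \<Longrightarrow> is_path V F xs"
  by (auto simp: is_path_iff)

lemma is_path_rev [simp]: "is_path V E (rev xs) \<longleftrightarrow> is_path V E xs"
  by (simp add: is_path_iff walk_edges_rev)

lemma walk_edges_at_last:
  assumes "u \<notin> set as"
  shows "{e \<in> walk_edges (as @ [u]). u \<in> e} = (if as = [] then {} else {{last as, u}})"
proof (cases "as = []")
  case False
  have "u \<notin> e" if "e \<in> walk_edges as" for e
    using assms walk_edge_subset[OF that] by blast
  with False show ?thesis by (simp add: walk_edges_snoc) blast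
qed simp

lemma walk_edges_at_hd:
  assumes "u \<notin> set bs"
  shows "{e \<in> walk_edges (u # bs). u \<in> e} = (if bs = [] then {} else {{u, hd bs}})"
proof (cases bs)
  case (Cons b bs')
  have "u \<notin> e" if "e \<in> walk_edges bs" for e
    using assms walk_edge_subset[OF that] by blast
  with Cons show ?thesis by simp blast
qed simp

lemma walk_edges_at_split:
  assumes "distinct (as @ u # bs)"
  shows "{e \<in> walk_edges (as @ u # bs). u \<in> e} =
    (if as = [] then {} else {{last as, u}}) \<union> (if bs = [] then {} else {{u, hd bs}})"
proof -
  have "{e \<in> walk_edges (as @ u # bs). u \<in> e} =
      {e \<in> walk_edges (as @ [u]). u \<in> e} \<union> {e \<in> walk_edges (u # bs). u \<in> e}"
    using walk_edges_split[of as u bs] by blast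
  also have "\<dots> = (if as = [] then {} else {{last as, u}}) \<union> (if bs = [] then {} else {{u, hd bs}})"
    using assms by (simp add: walk_edges_at_last walk_edges_at_hd)
  finally show ?thesis .
qed

lemma degree_walk_edges_le_2: "distinct xs \<Longrightarrow> degree (walk_edges xs) u \<le> 2"
proof (cases "u \<in> set xs")
  case True
  then obtain as bs where xs: "xs = as @ u # bs" by (meson split_list)
  assume "distinct xs"
  then have "{e \<in> walk_edges xs. u \<in> e} \<subseteq> {{last as, u}, {u, hd bs}}"
    unfolding xs using walk_edges_at_split[of as u bs] by auto
  then have "degree (walk_edges xs) u \<le> card {{last as, u}, {u, hd bs}}"
    unfolding degree_def by (simp add: card_mono)
  also have "\<dots> \<le> 2" by (simp add: card_insert_if)
  finally show ?thesis .
next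
  case False
  then have "{e \<in> walk_edges xs. u \<in> e} = {}" by (auto dest: walk_edge_subset)
  then show ?thesis unfolding degree_def by (metis card.empty zero_le)
qed

lemma vertex_in_walk_edge:
  assumes "2 \<le> length xs" "u \<in> set xs"
  obtains e where "e \<in> walk_edges xs" "u \<in> e"
proof -
  obtain as bs where xs: "xs = as @ u # bs" using assms(2) by (meson split_list)
  have "as \<noteq> [] \<or> bs \<noteq> []" using assms(1) xs by auto
  then have "{last as, u} \<in> walk_edges (as @ [u]) \<or> {u, hd bs} \<in> walk_edges (u # bs)"
    by (metis insertI1 list.collapse walk_edges_Cons_Cons walk_edges_snoc)
  then show ?thesis using that walk_edges_split[of as u bs] xs by blast
qed

lemma cycle_edges_rotate1: "2 \<le> length xs \<Longrightarrow> cycle_edges (rotate1 xs) = cycle_edges xs"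
proof (cases xs)
  case (Cons x ys)
  assume "2 \<le> length xs"
  then have ys: "ys \<noteq> []" using Cons by auto
  have "cycle_edges (ys @ [x]) = insert {last ys, x} (walk_edges ys) \<union> {{x, hd ys}}"
    using ys by (simp add: cycle_edges_def walk_edges_snoc)
  also have "\<dots> = cycle_edges (x # ys)"
    using ys by (cases ys) (auto simp: cycle_edges_def)
  finally show ?thesis using Cons by simp
qed simp

lemma cycle_edges_rotate: "2 \<le> length xs \<Longrightarrow> cycle_edges (rotate n xs) = cycle_edges xs"
  by (induction n) (simp_all add: cycle_edges_rotate1)

lemma rotate_to_head:
  assumes "u \<in> set xs"
  obtains n ys where "rotate n xs = u # ys"
proof -
  obtain i where i: "i < length xs" "xs ! i = u" using assms by (auto simp: in_set_conv_nth)
  then have "xs \<noteq> []" by auto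
  then have "hd (rotate i xs) = u" "rotate i xs \<noteq> []"
    using i hd_rotate_conv_nth[of xs i] by auto
  then show ?thesis using that by (metis list.collapse)
qed

lemma degree_cycle_edges:
  assumes "distinct xs" "3 \<le> length xs" "u \<in> set xs"
  shows "degree (cycle_edges xs) u = 2"
proof -
  obtain n ys where rot: "rotate n xs = u # ys" using rotate_to_head[OF assms(3)] .
  then have "distinct (u # ys)" "3 \<le> length (u # ys)"
    using assms by (metis distinct_rotate, metis length_rotate)
  then obtain a zs where ys: "ys = a # zs" "zs \<noteq> []" by (cases ys) fastforce+
  then have "last ys \<noteq> a" "u \<notin> set ys"
    using \<open>distinct (u # ys)\<close> last_in_set[of zs] by auto
  then have "{e \<in> cycle_edges (u # ys). u \<in> e} = {{u, a}, {last ys, u}}"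
    and "{u, a} \<noteq> {last ys, u}"
    using walk_edges_at_hd[of u ys] ys by (auto simp: cycle_edges_def doubleton_eq_iff)
  moreover have "cycle_edges (u # ys) = cycle_edges xs"
    using rot cycle_edges_rotate[of xs n] assms(2) by simp
  ultimately show ?thesis by (simp add: degree_def)
qed

lemma path_end_at_degree_one:
  assumes path: "is_path V F xs" and "u \<in> set xs" "finite F" "degree F u \<le> 1"
  obtains ys where "is_path V F (ys @ [u])" "walk_edges (ys @ [u]) = walk_edges xs"
proof -
  obtain as bs where xs: "xs = as @ u # bs" using \<open>u \<in> set xs\<close> by (meson split_list)
  have distinct: "distinct (as @ u # bs)" and walk: "walk_edges xs \<subseteq> F"
    using path xs by (auto simp: is_path_iff)
  have "as = [] \<or> bs = []"
  proof (rule ccontr)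
    assume "\<not> (as = [] \<or> bs = [])"
    then have "last as \<in> set as" "hd bs \<in> set bs" by auto
    then have "{last as, u} \<noteq> {u, hd bs}" using distinct by (auto simp: doubleton_eq_iff)
    moreover have "{e \<in> walk_edges xs. u \<in> e} = {{last as, u}, {u, hd bs}}"
      using walk_edges_at_split[OF distinct] \<open>\<not> (as = [] \<or> bs = [])\<close> xs
      by (simp add: insert_commute)
    ultimately have "card {e \<in> walk_edges xs. u \<in> e} = 2" by simp
    moreover have "card {e \<in> walk_edges xs. u \<in> e} \<le> card {e \<in> F. u \<in> e}"
      using walk \<open>finite F\<close> by (intro card_mono) auto
    ultimately have "2 \<le> card {e \<in> F. u \<in> e}" by simp
    with \<open>degree F u \<le> 1\<close> show False by (simp add: degree_def)
  qed
  then show ?thesis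
  proof
    assume "as = []"
    then have "rev xs = rev bs @ [u]" using xs by simp
    then show ?thesis using that[of "rev bs"] path by (metis is_path_rev walk_edges_rev)
  next
    assume "bs = []"
    then show ?thesis using that[of as] path xs by simp
  qed
qed

lemma set_butlast_tl_subset: "set (butlast (tl xs)) \<subseteq> set xs"
  by (cases xs) (auto dest: in_set_butlastD)

lemma walk_edges_subset_or_disjoint:
  assumes "walk_edges zs \<subseteq> E"
    and "\<And>u e e'. u \<in> set (butlast (tl zs)) \<Longrightarrow> e \<in> E \<Longrightarrow> e' \<in> E \<Longrightarrow> u \<in> e \<Longrightarrow> u \<in> e'
      \<Longrightarrow> e \<in> F \<longleftrightarrow> e' \<in> F"
  shows "walk_edges zs \<subseteq> F \<or> walk_edges zs \<inter> F = {}"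
  using assms
proof (induction zs rule: induct_list012)
  case (3 x y zs)
  show ?case
  proof (cases zs)
    case (Cons z zs')
    have IH: "walk_edges (y # zs) \<subseteq> F \<or> walk_edges (y # zs) \<inter> F = {}"
      using "3.IH"(2) "3.prems" Cons by (auto dest: in_set_butlastD)
    have "{x, y} \<in> F \<longleftrightarrow> {y, z} \<in> F"
      using "3.prems" Cons by (intro "3.prems"(2)[of y]) auto
    with IH Cons show ?thesis by auto
  qed auto
qed auto

lemma graph_finite_edges: "graph V E \<Longrightarrow> finite E"
proof -
  assume graph: "graph V E"
  then have "E \<subseteq> Pow V" unfolding graph_def by auto
  with graph show ?thesis unfolding graph_def by (simp add: finite_subset)
qed

lemma graph_subset: "graph V E \<Longrightarrow> F \<subseteq> E \<Longrightarrow> graph V F"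
  unfolding graph_def by blast

lemma finite_path_partition: "finite E \<Longrightarrow> path_partition V E P \<Longrightarrow> finite P"
proof -
  assume "finite E" "path_partition V E P"
  then have "P \<subseteq> Pow E" unfolding path_partition_def by blast
  with \<open>finite E\<close> show ?thesis by (simp add: finite_subset)
qed

lemma path_partition_exists: "graph V E \<Longrightarrow> \<exists>P. path_partition V E P"
proof -
  assume graph: "graph V E"
  have "\<exists>xs. is_path V E xs \<and> {e} = walk_edges xs" if "e \<in> E" for e
  proof -
    obtain a b where "e = {a, b}" "a \<noteq> b" "a \<in> V" "b \<in> V"
      using graph \<open>e \<in> E\<close> unfolding graph_def by blast
    then show ?thesis using \<open>e \<in> E\<close> by (intro exI[of _ "[a, b]"]) (simp add: is_path_iff)
  qed
  moreover have "pairwise disjnt ((\<lambda>e. {e}) ` E)"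
    by (auto simp: pairwise_def disjnt_def)
  ultimately have "path_partition V E ((\<lambda>e. {e}) ` E)"
    unfolding path_partition_def by blast
  then show ?thesis ..
qed

lemma pn_le: "path_partition V E P \<Longrightarrow> pn V E \<le> card P"
  unfolding pn_def by (rule Least_le) blast

lemma pn_attained: "graph V E \<Longrightarrow> \<exists>P. path_partition V E P \<and> card P = pn V E"
proof -
  assume "graph V E"
  then have "\<exists>n P. path_partition V E P \<and> card P = n" using path_partition_exists by blast
  from LeastI_ex[OF this] show ?thesis unfolding pn_def .
qed

lemma pn_Diff_less:
  assumes P: "path_partition V E P" "finite P"
    and covered: "p\<^sub>0 \<in> P" "p\<^sub>0 \<subseteq> D"
    and restrict: "\<And>p. p \<in> P \<Longrightarrow> \<not> p \<subseteq> D \<Longrightarrow> \<exists>xs. is_path V (E - D) xs \<and> p - D = walk_edges xs"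
  shows "pn V (E - D) < card P"
proof -
  define P' where "P' = (\<lambda>p. p - D) ` {p \<in> P. \<not> p \<subseteq> D}"
  have "path_partition V (E - D) P'"
    unfolding path_partition_def
  proof (intro conjI ballI)
    show "\<exists>xs. is_path V (E - D) xs \<and> p' = walk_edges xs" if "p' \<in> P'" for p'
      using that restrict unfolding P'_def by auto
    show "pairwise disjnt P'"
      using P(1) unfolding P'_def path_partition_def pairwise_def disjnt_def by blast
    show "\<Union>P' = E - D"
      using P(1) unfolding P'_def path_partition_def by blast
  qed
  then have "pn V (E - D) \<le> card P'" by (rule pn_le)
  also have "\<dots> \<le> card {p \<in> P. \<not> p \<subseteq> D}" unfolding P'_def using P(2) by (simp add: card_image_le)
  also have "\<dots> < card P" using P(2) covered by (intro psubset_card_mono) auto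
  finally show ?thesis .
qed

lemma pn_extend_path_le:
  assumes P: "path_partition V F P" "finite P" "Q \<in> P"
    and path: "is_path V (F \<union> W) xs" "walk_edges xs = Q \<union> W"
    and disjoint: "W \<inter> F = {}"
  shows "pn V (F \<union> W) \<le> card P"
proof -
  define P' where "P' = insert (Q \<union> W) (P - {Q})"
  have paths: "\<forall>p\<in>P. \<exists>xs. is_path V F xs \<and> p = walk_edges xs" "pairwise disjnt P" "\<Union>P = F"
    using P(1) unfolding path_partition_def by auto
  have "path_partition V (F \<union> W) P'"
    unfolding path_partition_def
  proof (intro conjI ballI)
    fix p assume "p \<in> P'"
    then consider "p = Q \<union> W" | "p \<in> P" unfolding P'_def by blast
    then show "\<exists>ys. is_path V (F \<union> W) ys \<and> p = walk_edges ys"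
    proof cases
      case 2
      then show ?thesis using paths(1) by (meson is_path_mono sup_ge1)
    qed (use path in auto)
  next
    have "disjnt (Q \<union> W) p" if "p \<in> P - {Q}" for p
      using that paths(2,3) P(3) disjoint unfolding pairwise_def disjnt_def by blast
    then show "pairwise disjnt P'"
      using paths(2) unfolding P'_def by (auto simp: pairwise_insert disjnt_sym intro: pairwise_subset)
    show "\<Union>P' = F \<union> W"
      using paths(3) P(3) unfolding P'_def by blast
  qed
  then have "pn V (F \<union> W) \<le> card P'" by (rule pn_le)
  also have "\<dots> \<le> Suc (card (P - {Q}))"
    unfolding P'_def using P(2) by (simp add: card_insert_if)
  also have "\<dots> = card P" using P(2,3) by (rule card_Suc_Diff1)
  finally show ?thesis .
qed

lemma pn_add_path_le:
  assumes "graph V F" "is_path V (F \<union> walk_edges xs) xs" "walk_edges xs \<inter> F = {}"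
  shows "pn V (F \<union> walk_edges xs) \<le> pn V F + 1"
proof -
  obtain P where P: "path_partition V F P" "card P = pn V F"
    using pn_attained[OF assms(1)] by blast
  have "\<exists>ys. is_path V (F \<union> walk_edges xs) ys \<and> p = walk_edges ys" if "p \<in> P" for p
    using P(1) that unfolding path_partition_def by (meson is_path_mono sup_ge1)
  with P(1) assms(2,3) have "path_partition V (F \<union> walk_edges xs) (insert (walk_edges xs) P)"
    unfolding path_partition_def by (auto simp: pairwise_insert disjnt_def)
  then have "pn V (F \<union> walk_edges xs) \<le> card (insert (walk_edges xs) P)" by (rule pn_le)
  also have "\<dots> \<le> pn V F + 1"
    using P finite_path_partition[OF graph_finite_edges[OF assms(1)]] by (simp add: card_insert_if)
  finally show ?thesis .
qed

locale pan_cycle =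
  fixes V :: "'a set" and E :: "'a set set" and v :: 'a and cs :: "'a list"
  assumes graph: "graph V E"
    and cycle: "is_cycle V E (v # cs)"
    and degree_v: "degree E v = 3"
    and degree_cs: "\<And>w. w \<in> set cs \<Longrightarrow> degree E w = 2"
begin

abbreviation EC :: "'a set set" where
  "EC \<equiv> cycle_edges (v # cs)"

lemma finite_E: "finite E"
  using graph by (rule graph_finite_edges)

lemma cycle_props: "2 \<le> length cs" "distinct (v # cs)" "set (v # cs) \<subseteq> V" "EC \<subseteq> E"
  using cycle by (auto simp: is_cycle_iff)

lemma last_cs_in_set: "last cs \<in> set cs"
  using cycle_props(1) by (intro last_in_set) auto

lemma EC_eq: "EC = insert {last cs, v} (walk_edges (v # cs))"
  using cycle_props(1) by (auto simp: cycle_edges_def)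

lemma EC_edge_subset: "e \<in> EC \<Longrightarrow> e \<subseteq> set (v # cs)"
  using walk_edge_subset[of e "v # cs"] last_cs_in_set by (auto simp: EC_eq)

lemma edge_at_cycle_vertex_in_EC:
  assumes "u \<in> set cs" "e \<in> E" "u \<in> e"
  shows "e \<in> EC"
proof -
  have "card {e \<in> EC. u \<in> e} = card {e \<in> E. u \<in> e}"
    using degree_cycle_edges[of "v # cs" u] degree_cs[of u] cycle_props assms(1)
    by (simp add: degree_def)
  then have "{e \<in> EC. u \<in> e} = {e \<in> E. u \<in> e}"
    using cycle_props(4) finite_E by (intro card_subset_eq) auto
  with assms show ?thesis by blast
qed

lemma EC_agrees_away_from_v:
  assumes "u \<noteq> v" "e \<in> E" "e' \<in> E" "u \<in> e" "u \<in> e'"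
  shows "e \<in> EC \<longleftrightarrow> e' \<in> EC"
proof (cases "u \<in> set cs")
  case True
  then show ?thesis using assms edge_at_cycle_vertex_in_EC by blast
next
  case False
  then have "e \<notin> EC" "e' \<notin> EC" using assms EC_edge_subset by fastforce+
  then show ?thesis by simp
qed

lemma walk_avoiding_v:
  assumes "walk_edges zs \<subseteq> E" "v \<notin> set (butlast (tl zs))"
  shows "walk_edges zs \<subseteq> EC \<or> walk_edges zs \<inter> EC = {}"
  using assms(1)
proof (rule walk_edges_subset_or_disjoint)
  fix u e e' assume "u \<in> set (butlast (tl zs))" "e \<in> E" "e' \<in> E" "u \<in> e" "u \<in> e'"
  then show "e \<in> EC \<longleftrightarrow> e' \<in> EC" using assms(2) EC_agrees_away_from_v by metis
qed

lemma degree_v_off_cycle: "degree (E - EC) v = 1"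
proof -
  have "{e \<in> E. v \<in> e} = {e \<in> EC. v \<in> e} \<union> {e \<in> E - EC. v \<in> e}"
    using cycle_props(4) by blast
  then have "degree E v = degree EC v + degree (E - EC) v"
    unfolding degree_def using finite_E finite_subset[OF cycle_props(4) finite_E]
    by (simp add: card_Un_disjoint disjoint_iff)
  moreover have "degree EC v = 2"
    using cycle_props by (intro degree_cycle_edges) auto
  ultimately show ?thesis using degree_v by simp
qed

lemma pendant_edge: obtains e\<^sub>0 where "{e \<in> E - EC. v \<in> e} = {e\<^sub>0}"
  using degree_v_off_cycle unfolding degree_def by (rule card_1_singletonE)

lemma mixed_path_split:
  assumes path: "is_path V E xs" and "walk_edges xs \<inter> EC \<noteq> {}" "\<not> walk_edges xs \<subseteq> EC"
  obtains ys where "is_path V (E - EC) (ys @ [v])" "walk_edges xs - EC = walk_edges (ys @ [v])"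
proof -
  have oriented: "\<exists>ys. is_path V (E - EC) (ys @ [v]) \<and> walk_edges xs - EC = walk_edges (ys @ [v])"
    if path': "is_path V E (as @ v # bs)" and same: "walk_edges (as @ v # bs) = walk_edges xs"
      and "walk_edges (as @ [v]) \<inter> EC = {}" "walk_edges (v # bs) \<subseteq> EC" for as bs
  proof (intro exI conjI)
    have split: "walk_edges xs = walk_edges (as @ [v]) \<union> walk_edges (v # bs)"
      using walk_edges_split[of as v bs] same by simp
    then show "walk_edges xs - EC = walk_edges (as @ [v])"
      using \<open>walk_edges (as @ [v]) \<inter> EC = {}\<close> \<open>walk_edges (v # bs) \<subseteq> EC\<close> by blast
    have "as \<noteq> []" using split \<open>walk_edges (v # bs) \<subseteq> EC\<close> assms(3) by auto
    then show "is_path V (E - EC) (as @ [v])"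
      using path' split same \<open>walk_edges (as @ [v]) \<inter> EC = {}\<close> by (auto simp: is_path_iff Suc_le_eq)
  qed
  have distinct: "distinct xs" and walk: "walk_edges xs \<subseteq> E"
    using path by (auto simp: is_path_iff)
  have "v \<in> set xs"
  proof (rule ccontr)
    assume "v \<notin> set xs"
    then have "v \<notin> set (butlast (tl xs))" using set_butlast_tl_subset by fast
    with walk assms(2,3) show False using walk_avoiding_v by blast
  qed
  then obtain as bs where xs: "xs = as @ v # bs" by (meson split_list)
  have split: "walk_edges xs = walk_edges (as @ [v]) \<union> walk_edges (v # bs)"
    using walk_edges_split[of as v bs] xs by simp
  have "v \<notin> set as" "v \<notin> set bs" using distinct xs by auto
  then have "v \<notin> set (butlast (tl (as @ [v])))" "v \<notin> set (butlast (tl (v # bs)))"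
    by (cases as; auto dest: in_set_butlastD)+
  then have "walk_edges (as @ [v]) \<subseteq> EC \<or> walk_edges (as @ [v]) \<inter> EC = {}"
    and "walk_edges (v # bs) \<subseteq> EC \<or> walk_edges (v # bs) \<inter> EC = {}"
    using walk split walk_avoiding_v by auto
  with split assms(2,3) consider
      "walk_edges (as @ [v]) \<inter> EC = {}" "walk_edges (v # bs) \<subseteq> EC"
    | "walk_edges (v # bs) \<inter> EC = {}" "walk_edges (as @ [v]) \<subseteq> EC"
    by blast
  then have "\<exists>ys. is_path V (E - EC) (ys @ [v]) \<and> walk_edges xs - EC = walk_edges (ys @ [v])"
  proof cases
    case 1
    then show ?thesis using oriented[of as bs] path xs by simp
  next
    case 2
    have "rev xs = rev bs @ v # rev as" using xs by simp
    moreover have "walk_edges (rev bs @ [v]) = walk_edges (v # bs)"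
      and "walk_edges (v # rev as) = walk_edges (as @ [v])"
      using walk_edges_rev[of "v # bs"] walk_edges_rev[of "as @ [v]"] by simp_all
    ultimately show ?thesis
      using oriented[of "rev bs" "rev as"] 2 path by (metis is_path_rev walk_edges_rev)
  qed
  then show ?thesis using that by blast
qed

lemma path_Diff_EC:
  assumes "is_path V E xs" "\<not> walk_edges xs \<subseteq> EC"
  shows "\<exists>ys. is_path V (E - EC) ys \<and> walk_edges xs - EC = walk_edges ys"
proof (cases "walk_edges xs \<inter> EC = {}")
  case True
  then have "is_path V (E - EC) xs" using assms(1) by (auto simp: is_path_iff)
  with True show ?thesis by blast
next
  case False
  then show ?thesis using mixed_path_split[OF assms(1) False assms(2)] by blast
qed

lemma mixed_path_contains_pendant_edge:
  assumes "is_path V E xs" "walk_edges xs \<inter> EC \<noteq> {}" "\<not> walk_edges xs \<subseteq> EC"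
    and "{e \<in> E - EC. v \<in> e} = {e\<^sub>0}"
  shows "e\<^sub>0 \<in> walk_edges xs"
proof -
  obtain ys where ys: "is_path V (E - EC) (ys @ [v])" "walk_edges xs - EC = walk_edges (ys @ [v])"
    using mixed_path_split[OF assms(1-3)] .
  then have "ys \<noteq> []" unfolding is_path_iff by auto
  then have edge: "{last ys, v} \<in> walk_edges xs - EC" unfolding ys(2) by (simp add: walk_edges_snoc)
  moreover have "walk_edges xs \<subseteq> E" using assms(1) unfolding is_path_iff by blast
  ultimately have "{last ys, v} \<in> {e \<in> E - EC. v \<in> e}" by blast
  with edge show ?thesis unfolding assms(4) by blast
qed

lemma path_partition_has_cycle_path:
  assumes P: "path_partition V E P"
  shows "\<exists>p\<in>P. p \<subseteq> EC"
proof (rule ccontr)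
  assume none: "\<not> (\<exists>p\<in>P. p \<subseteq> EC)"
  obtain e\<^sub>0 where e\<^sub>0: "{e \<in> E - EC. v \<in> e} = {e\<^sub>0}" using pendant_edge .
  have paths: "\<forall>p\<in>P. \<exists>xs. is_path V E xs \<and> p = walk_edges xs" "pairwise disjnt P" "\<Union>P = E"
    using P unfolding path_partition_def by auto
  have meets: "e\<^sub>0 \<in> p" if "p \<in> P" "p \<inter> EC \<noteq> {}" for p
  proof -
    obtain xs where xs: "is_path V E xs" "p = walk_edges xs" using paths(1) \<open>p \<in> P\<close> by blast
    moreover have "\<not> p \<subseteq> EC" using none \<open>p \<in> P\<close> by blast
    ultimately show ?thesis
      using mixed_path_contains_pendant_edge[OF xs(1) _ _ e\<^sub>0] that(2) by simp
  qed
  obtain p\<^sub>0 where p\<^sub>0: "p\<^sub>0 \<in> P" "e\<^sub>0 \<in> p\<^sub>0" using e\<^sub>0 paths(3) by blast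
  have "EC \<subseteq> p\<^sub>0"
  proof
    fix c assume "c \<in> EC"
    then obtain p where "p \<in> P" "c \<in> p" using paths(3) cycle_props(4) by blast
    with \<open>c \<in> EC\<close> have "e\<^sub>0 \<in> p" using meets by blast
    with p\<^sub>0 \<open>p \<in> P\<close> have "p = p\<^sub>0" using paths(2) by (meson disjnt_iff pairwiseD)
    with \<open>c \<in> p\<close> show "c \<in> p\<^sub>0" by simp
  qed
  then have "insert e\<^sub>0 {e \<in> EC. v \<in> e} \<subseteq> {e \<in> p\<^sub>0. v \<in> e}" using p\<^sub>0 e\<^sub>0 by blast
  moreover have "finite {e \<in> p\<^sub>0. v \<in> e}"
  proof -
    have "p\<^sub>0 \<subseteq> E" using p\<^sub>0(1) paths(3) by blast
    then show ?thesis using finite_E by (simp add: finite_subset)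
  qed
  ultimately have "card (insert e\<^sub>0 {e \<in> EC. v \<in> e}) \<le> card {e \<in> p\<^sub>0. v \<in> e}"
    by (rule card_mono[rotated])
  moreover have "card (insert e\<^sub>0 {e \<in> EC. v \<in> e}) = 3"
  proof -
    have "e\<^sub>0 \<notin> EC" using e\<^sub>0 by blast
    moreover have "finite {e \<in> EC. v \<in> e}" using finite_subset[OF cycle_props(4) finite_E] by simp
    moreover have "card {e \<in> EC. v \<in> e} = 2"
      using degree_cycle_edges[of "v # cs" v] cycle_props by (simp add: degree_def)
    ultimately show ?thesis by simp
  qed
  moreover obtain xs where "is_path V E xs" "p\<^sub>0 = walk_edges xs" using paths(1) p\<^sub>0(1) by blast
  then have "card {e \<in> p\<^sub>0. v \<in> e} \<le> 2"
    using degree_walk_edges_le_2[of xs v] by (simp add: is_path_iff degree_def)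
  ultimately show False by linarith
qed

lemma pn_Diff_cycle_less: "pn V (E - EC) < pn V E"
proof -
  obtain P where P: "path_partition V E P" "card P = pn V E" using pn_attained[OF graph] by blast
  obtain p\<^sub>0 where "p\<^sub>0 \<in> P" "p\<^sub>0 \<subseteq> EC" using path_partition_has_cycle_path[OF P(1)] by blast
  moreover have "\<exists>ys. is_path V (E - EC) ys \<and> p - EC = walk_edges ys"
    if "p \<in> P" "\<not> p \<subseteq> EC" for p
  proof -
    obtain xs where "is_path V E xs" "p = walk_edges xs"
      using P(1) \<open>p \<in> P\<close> unfolding path_partition_def by blast
    then show ?thesis using path_Diff_EC \<open>\<not> p \<subseteq> EC\<close> by blast
  qed
  ultimately have "pn V (E - EC) < card P"
    using pn_Diff_less[OF P(1) finite_path_partition[OF finite_E P(1)]] by blast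
  with P(2) show ?thesis by simp
qed

lemma closing_edge_notin_walk_edges: "{last cs, v} \<notin> walk_edges (v # cs)"
proof
  obtain a bs where cs: "cs = a # bs" "bs \<noteq> []" using cycle_props(1) by (cases cs) fastforce+
  have "v \<notin> set cs" "last cs \<noteq> a" "last cs \<noteq> v"
    using cycle_props(2) cs last_in_set[of bs] by auto
  then have "{e \<in> walk_edges (v # cs). v \<in> e} = {{v, a}}"
    using walk_edges_at_hd[of v cs] cs(1) by simp
  moreover assume "{last cs, v} \<in> walk_edges (v # cs)"
  then have "{last cs, v} \<in> {e \<in> walk_edges (v # cs). v \<in> e}" by simp
  ultimately have "{last cs, v} = {v, a}" by simp
  with \<open>last cs \<noteq> a\<close> \<open>last cs \<noteq> v\<close> show False by (auto simp: doubleton_eq_iff)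
qed

lemma path_append_cycle:
  assumes path: "is_path V (E - EC) (ys @ [v])"
  shows "is_path V (E - EC \<union> walk_edges (v # cs)) (ys @ v # cs)"
proof -
  have "u \<notin> set cs" if "u \<in> set ys" for u
  proof
    assume "u \<in> set cs"
    obtain e where "e \<in> walk_edges (ys @ [v])" "u \<in> e"
      using vertex_in_walk_edge[of "ys @ [v]" u] path \<open>u \<in> set ys\<close> by (auto simp: is_path_iff)
    with path have "e \<in> E - EC" "u \<in> e" by (auto simp: is_path_iff)
    with \<open>u \<in> set cs\<close> show False using edge_at_cycle_vertex_in_EC by blast
  qed
  then show ?thesis
    using path cycle_props walk_edges_split[of ys v cs] by (auto simp: is_path_iff)
qed

lemma pn_le_Diff_cycle: "pn V E \<le> pn V (E - EC) + 1"
proof -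
  define W where "W = walk_edges (v # cs)"
  have graph': "graph V (E - EC)" using graph by (rule graph_subset) blast
  obtain P where P: "path_partition V (E - EC) P" "card P = pn V (E - EC)"
    using pn_attained[OF graph'] by blast
  obtain e\<^sub>0 where e\<^sub>0: "{e \<in> E - EC. v \<in> e} = {e\<^sub>0}" using pendant_edge .
  then obtain Q where Q: "Q \<in> P" "e\<^sub>0 \<in> Q" using P(1) unfolding path_partition_def by blast
  then obtain xs where xs: "is_path V (E - EC) xs" "Q = walk_edges xs"
    using P(1) unfolding path_partition_def by blast
  have "v \<in> set xs" using e\<^sub>0 Q(2) xs(2) walk_edge_subset by blast
  then obtain ys where ys: "is_path V (E - EC) (ys @ [v])" "walk_edges (ys @ [v]) = Q"
    using path_end_at_degree_one[OF xs(1) \<open>v \<in> set xs\<close>] finite_E degree_v_off_cycle xs(2)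
    by (metis finite_Diff order_refl)
  have "walk_edges (ys @ v # cs) = Q \<union> W"
    using walk_edges_split[of ys v cs] ys(2) W_def by simp
  then have "pn V (E - EC \<union> W) \<le> card P"
    using pn_extend_path_le[OF P(1) finite_path_partition[OF _ P(1)] Q(1) path_append_cycle[OF ys(1)]]
      finite_E EC_eq W_def by blast
  moreover have "pn V (E - EC \<union> W \<union> walk_edges [last cs, v]) \<le> pn V (E - EC \<union> W) + 1"
  proof (rule pn_add_path_le)
    show "graph V (E - EC \<union> W)" using graph cycle_props(4) EC_eq W_def by (auto intro: graph_subset)
    have "last cs \<in> set cs" "last cs \<noteq> v" "{last cs, v} \<in> E"
      using cycle_props EC_eq last_cs_in_set by auto
    then show "is_path V (E - EC \<union> W \<union> walk_edges [last cs, v]) [last cs, v]"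
      using cycle_props(3) by (auto simp: is_path_iff)
    show "walk_edges [last cs, v] \<inter> (E - EC \<union> W) = {}"
      using closing_edge_notin_walk_edges EC_eq W_def by auto
  qed
  moreover have "E - EC \<union> W \<union> walk_edges [last cs, v] = E"
    using cycle_props(4) EC_eq W_def by auto
  ultimately show ?thesis using P(2) by simp
qed

theorem pn_eq: "pn V E = pn V (E - EC) + 1"
  using pn_Diff_cycle_less pn_le_Diff_cycle by simp

end

theorem lemma5:
  fixes V :: "'a set" and E :: "'a set set" and C :: "'a list"
  assumes "graph V E"
    and "is_pan_cycle V E C"
  shows "pn V E = pn V (E - cycle_edges C) + 1"
proof -
  obtain v where cycle: "is_cycle V E C" and v: "v \<in> set C" "degree E v = 3"
    and others: "\<forall>w\<in>set C. w \<noteq> v \<longrightarrow> degree E w = 2"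
    using assms(2) unfolding is_pan_cycle_def by blast
  obtain n cs where rot: "rotate n C = v # cs" using rotate_to_head[OF v(1)] .
  have C: "3 \<le> length C" "distinct C" "set C \<subseteq> V" "cycle_edges C \<subseteq> E"
    using cycle by (simp_all add: is_cycle_iff)
  have same_edges: "cycle_edges (v # cs) = cycle_edges C"
    using cycle_edges_rotate[of C n] rot C(1) by simp
  have rotated: "length (v # cs) = length C" "distinct (v # cs)" "set (v # cs) = set C"
    using C(2) rot by (metis length_rotate, metis distinct_rotate, metis set_rotate)
  interpret pan_cycle V E v cs
  proof
    show "graph V E" by (fact assms(1))
    show "is_cycle V E (v # cs)" using C rotated same_edges by (simp add: is_cycle_iff)
    show "degree E v = 3" by (fact v(2))
    fix w assume "w \<in> set cs"
    then have "w \<in> set C" "w \<noteq> v" using rotated by auto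
    then show "degree E w = 2" using others by blast
  qed
  show ?thesis using pn_eq same_edges by simp
qed

end
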